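(* Let $D$ be a division algebra and $S$ a ring extension of $D$. Assume that elements $f_1,\ldots,f_d\in S$ are automorphic over $D$ and left linearly independent over $D$. Then $f=f_1+\cdots+f_d$ is automorphic over $D$ if and only if there is a single automorphism $\pi\in\mathrm{Aut}(D)$ such that $f,f_1,\ldots,f_d$ are all automorphic over $D$ with respect to $\pi$.
   Context: An element $a$ of a ring $S\supseteq D$ is automorphic over $D$ with respect to $\pi\in\mathrm{Aut}(D)$ if $ab=\pi(b)a$ for all $b\in D$; it is automorphic over $D$ if it is automorphic with respect to some automorphism of $D$. *)

theory Defs
  imports Main
begin

text \<open>The ambient ring S is a type of class ring_1; the division algebra D is a subset
  of S that is a (nontrivial) division subring.\<close>

definition division_subring :: "'a::ring_1 set \<Rightarrow> bool" where
  "division_subring D \<longleftrightarrow> 0 \<in> D \<and> 1 \<in> D \<and> (0::'a) \<noteq> 1 \<and>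
     (\<forall>x\<in>D. \<forall>y\<in>D. x + y \<in> D \<and> x * y \<in> D \<and> - x \<in> D) \<and>
     (\<forall>x\<in>D. x \<noteq> 0 \<longrightarrow> (\<exists>y\<in>D. x * y = 1 \<and> y * x = 1))"

text \<open>Ring automorphisms of D (as maps on D; values outside D are irrelevant).\<close>

definition ring_aut_on :: "'a::ring_1 set \<Rightarrow> ('a \<Rightarrow> 'a) \<Rightarrow> bool" where
  "ring_aut_on D \<pi> \<longleftrightarrow> bij_betw \<pi> D D \<and> \<pi> 1 = 1 \<and>
     (\<forall>x\<in>D. \<forall>y\<in>D. \<pi> (x + y) = \<pi> x + \<pi> y \<and> \<pi> (x * y) = \<pi> x * \<pi> y)"

definition automorphic_wrt :: "'a::ring_1 set \<Rightarrow> ('a \<Rightarrow> 'a) \<Rightarrow> 'a \<Rightarrow> bool" where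
  "automorphic_wrt D \<pi> a \<longleftrightarrow> (\<forall>b\<in>D. a * b = \<pi> b * a)"

definition automorphic :: "'a::ring_1 set \<Rightarrow> 'a \<Rightarrow> bool" where
  "automorphic D a \<longleftrightarrow> (\<exists>\<pi>. ring_aut_on D \<pi> \<and> automorphic_wrt D \<pi> a)"

definition left_lin_indep :: "'a::ring_1 set \<Rightarrow> (nat \<Rightarrow> 'a) \<Rightarrow> nat \<Rightarrow> bool" where
  "left_lin_indep D f d \<longleftrightarrow>
     (\<forall>c. (\<forall>i<d. c i \<in> D) \<longrightarrow> (\<Sum>i<d. c i * f i) = 0 \<longrightarrow> (\<forall>i<d. c i = 0))"

end

theory Submission
  imports Defs
begin

text \<open>If \<open>f\<^sub>i b = \<pi>\<^sub>i(b) f\<^sub>i\<close> and \<open>f b = \<pi>(b) f\<close> for \<open>f = \<Sum> f\<^sub>i\<close>, then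
  \<open>\<Sum> \<pi>\<^sub>i(b) f\<^sub>i = f b = \<Sum> \<pi>(b) f\<^sub>i\<close>, and left linear independence forces \<open>\<pi>\<^sub>i(b) = \<pi>(b)\<close>.\<close>

lemma division_subring_diff:
  assumes "division_subring D" "x \<in> D" "y \<in> D"
  shows "x - y \<in> D"
proof -
  have "x + - y \<in> D"
    using assms unfolding division_subring_def by blast
  then show ?thesis by simp
qed

lemma ring_aut_on_closed:
  assumes "ring_aut_on D \<pi>" "x \<in> D"
  shows "\<pi> x \<in> D"
  using assms unfolding ring_aut_on_def bij_betw_def by blast

lemma left_lin_indep_coeff_eq:
  assumes indep: "left_lin_indep D f d"
    and diff_closed: "\<And>x y. x \<in> D \<Longrightarrow> y \<in> D \<Longrightarrow> x - y \<in> D"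
    and a: "\<forall>i<d. a i \<in> D" and c: "\<forall>i<d. c i \<in> D"
    and eq: "(\<Sum>i<d. a i * f i) = (\<Sum>i<d. c i * f i)"
    and "i < d"
  shows "a i = c i"
proof -
  have "(\<Sum>i<d. (a i - c i) * f i) = 0"
    using eq by (simp add: left_diff_distrib sum_subtractf)
  moreover have "\<forall>i<d. a i - c i \<in> D"
    using a c by (simp add: diff_closed)
  ultimately have "a i - c i = 0"
    using indep[unfolded left_lin_indep_def, rule_format, of "\<lambda>i. a i - c i"] \<open>i < d\<close>
    by blast
  then show ?thesis by simp
qed

lemma automorphic_wrt_sum_imp_summand:
  assumes subring: "division_subring D" and indep: "left_lin_indep D f d"
    and aut: "ring_aut_on D \<pi>" and sum_wrt: "automorphic_wrt D \<pi> (\<Sum>i<d. f i)"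
    and summands: "\<forall>i<d. automorphic D (f i)"
    and "i < d"
  shows "automorphic_wrt D \<pi> (f i)"
  unfolding automorphic_wrt_def
proof
  fix b assume b: "b \<in> D"
  obtain p where p: "\<And>j. j < d \<Longrightarrow> ring_aut_on D (p j) \<and> automorphic_wrt D (p j) (f j)"
    using summands unfolding automorphic_def by metis
  have "(\<Sum>j<d. p j b * f j) = (\<Sum>j<d. f j * b)"
    using p b unfolding automorphic_wrt_def by (intro sum.cong) auto
  also have "\<dots> = (\<Sum>j<d. f j) * b"
    by (simp add: sum_distrib_right)
  also have "\<dots> = \<pi> b * (\<Sum>j<d. f j)"
    using sum_wrt b unfolding automorphic_wrt_def by blast
  also have "\<dots> = (\<Sum>j<d. \<pi> b * f j)"
    by (simp add: sum_distrib_left)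
  finally have "(\<Sum>j<d. p j b * f j) = (\<Sum>j<d. \<pi> b * f j)" .
  moreover have "\<forall>j<d. p j b \<in> D" "\<forall>j<d. \<pi> b \<in> D"
    using p aut ring_aut_on_closed b by blast+
  ultimately have "p i b = \<pi> b"
    using left_lin_indep_coeff_eq[OF indep, of "\<lambda>j. p j b" "\<lambda>j. \<pi> b" i]
      division_subring_diff[OF subring] \<open>i < d\<close> by blast
  moreover have "f i * b = p i b * f i"
    using p[OF \<open>i < d\<close>] b unfolding automorphic_wrt_def by blast
  ultimately show "f i * b = \<pi> b * f i" by simp
qed

theorem lemma5p5:
  fixes D :: "'a::ring_1 set" and f :: "nat \<Rightarrow> 'a" and d :: nat
  assumes "division_subring D"
    and "\<forall>i<d. automorphic D (f i)"
    and "left_lin_indep D f d"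
  shows "automorphic D (\<Sum>i<d. f i) \<longleftrightarrow>
         (\<exists>\<pi>. ring_aut_on D \<pi> \<and> automorphic_wrt D \<pi> (\<Sum>i<d. f i) \<and>
              (\<forall>i<d. automorphic_wrt D \<pi> (f i)))"
proof
  assume "automorphic D (\<Sum>i<d. f i)"
  then obtain \<pi> where "ring_aut_on D \<pi>" "automorphic_wrt D \<pi> (\<Sum>i<d. f i)"
    unfolding automorphic_def by blast
  with automorphic_wrt_sum_imp_summand[OF assms(1,3) _ _ assms(2)]
  show "\<exists>\<pi>. ring_aut_on D \<pi> \<and> automorphic_wrt D \<pi> (\<Sum>i<d. f i) \<and>
            (\<forall>i<d. automorphic_wrt D \<pi> (f i))"
    by blast
qed (unfold automorphic_def, blast)

end
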